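(* In the setting below, let $\lambda>0$, $\theta\in\mathbb{R}$ and $\delta=\lambda\ln\beta$. Let $\mathcal{T}$ be the (random) output tree of PrivTree$(D,\lambda,\theta,\delta)$ and let $\mathcal{T}^*$ be the tree produced by the same procedure except that each visited node $v$ is split if and only if $c(v)>\theta$ (no bias and no noise). Assume $\mathcal{T}^*$ is finite. If $|\mathcal{T}^*|>1$, then $\mathbb{E}[|\mathcal{T}|]\le 2\,|\mathcal{T}^*|$, where $|\cdot|$ denotes the number of nodes of a tree.
   Context: $\mathrm{Lap}(\lambda)$ is the Laplace distribution with density $\frac{1}{2\lambda}e^{-|y|/\lambda}$. Setting: $\Omega$ is a domain and there is a fixed, data-independent hierarchical splitting scheme of fanout $\beta\ge 2$: an infinite rooted tree of candidate nodes in which every node $v$ has exactly $\beta$ children, each node $v$ carries a sub-domain $\mathrm{dom}(v)\subseteq\Omega$, the root $v_1$ has $\mathrm{dom}(v_1)=\Omega$, and the sub-domains of the $\beta$ children of $v$ partition $\mathrm{dom}(v)$. $\mathrm{depth}(v)$ is the hop distance from $v$ to the root. A dataset $D$ is a finite multiset of points of $\Omega$; $c(v)$ is the number of points of $D$ lying in $\mathrm{dom}(v)$. PrivTree$(D,\lambda,\theta,\delta)$: start with the tree consisting only of the root, marked unvisited. While some node $v$ is unvisited: mark $v$ visited; set $b(v)=\max\{\theta-\delta,\ c(v)-\mathrm{depth}(v)\cdot\delta\}$; set $\hat b(v)=b(v)+\eta_v$ with $\eta_v\sim\mathrm{Lap}(\lambda)$ fresh and independent; if $\hat b(v)>\theta$,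 add all $\beta$ children of $v$ as unvisited nodes. The output is the resulting tree of nodes. *)

theory Defs
  imports "HOL-Probability.Probability"
begin

definition laplace_measure :: "real \<Rightarrow> real measure" where
  "laplace_measure lam = density lborel (\<lambda>y. ennreal (exp (- \<bar>y\<bar> / lam) / (2 * lam)))"

text \<open>Candidate nodes of the infinite beta-ary tree: node v is encoded by the list of child
  indices on the path from the root (root = []); children of v are v @ [i] for i < beta.\<close>
definition cand_nodes :: "nat \<Rightarrow> nat list set" where
  "cand_nodes \<beta> = {v. \<forall>i\<in>set v. i < \<beta>}"

definition splitting_scheme :: "'a set \<Rightarrow> nat \<Rightarrow> (nat list \<Rightarrow> 'a set) \<Rightarrow> bool" where
  "splitting_scheme \<Omega> \<beta> sdom \<longleftrightarrow> 2 \<le> \<beta> \<and> sdom [] = \<Omega> \<and>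
     (\<forall>v \<in> cand_nodes \<beta>. (\<Union>i<\<beta>. sdom (v @ [i])) = sdom v \<and>
        (\<forall>i<\<beta>. \<forall>j<\<beta>. i \<noteq> j \<longrightarrow> sdom (v @ [i]) \<inter> sdom (v @ [j]) = {}))"

definition cnt :: "'a multiset \<Rightarrow> (nat list \<Rightarrow> 'a set) \<Rightarrow> nat list \<Rightarrow> nat" where
  "cnt D sdom v = size (filter_mset (\<lambda>x. x \<in> sdom v) D)"

definition biased_cnt :: "'a multiset \<Rightarrow> (nat list \<Rightarrow> 'a set) \<Rightarrow> real \<Rightarrow> real \<Rightarrow> nat list \<Rightarrow> real" where
  "biased_cnt D sdom \<theta> \<delta> v = max (\<theta> - \<delta>) (real (cnt D sdom v) - real (length v) * \<delta>)"

text \<open>Output tree of PrivTree given the noise values eta (fresh noise eta v for every node v):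
  a node is in the tree iff every proper ancestor u was split, i.e. b(u) + eta u > theta.\<close>
definition privtree_out ::
  "nat \<Rightarrow> 'a multiset \<Rightarrow> (nat list \<Rightarrow> 'a set) \<Rightarrow> real \<Rightarrow> real \<Rightarrow> (nat list \<Rightarrow> real) \<Rightarrow> nat list set" where
  "privtree_out \<beta> D sdom \<theta> \<delta> \<eta> =
     {v \<in> cand_nodes \<beta>. \<forall>k < length v. biased_cnt D sdom \<theta> \<delta> (take k v) + \<eta> (take k v) > \<theta>}"

definition exact_tree ::
  "nat \<Rightarrow> 'a multiset \<Rightarrow> (nat list \<Rightarrow> 'a set) \<Rightarrow> real \<Rightarrow> nat list set" where
  "exact_tree \<beta> D sdom \<theta> = {v \<in> cand_nodes \<beta>. \<forall>k < length v. real (cnt D sdom (take k v)) > \<theta>}"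

definition noise_space :: "real \<Rightarrow> (nat list \<Rightarrow> real) measure" where
  "noise_space lam = PiM UNIV (\<lambda>_. laplace_measure lam)"

end

theory Submission
  imports Defs
begin

text \<open>
  Call a node of the noise-free tree T* internal if its count exceeds theta and a leaf otherwise;
  since |T*| > 1 the root is internal. A node v of the PrivTree output that is not internal in T*
  lies below a leaf u of T* (possibly v = u). On the path from u down to v every count is at most
  theta and every depth is positive, so each biased count equals its floor theta - delta, and each
  of these |v| - |u| nodes was split only because its Laplace noise exceeded delta = lambda ln beta,
  an event of probability 1/(2 beta). Summing over the beta^n descendants of u at distance n, the
  expected number of output nodes below u is at most the sum of 2^-n, i.e. 2. Hence the expected
  output size is at most |internal| + 2 |leaves| \<le> 2 |T*|.
\<close>

lemma (in prob_space) nn_integral_card_le_cover: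
  fixes A :: "'a \<Rightarrow> 'i::countable set" and S :: "'j \<Rightarrow> 'i set"
  assumes "finite F" and [measurable]: "\<And>u v. E u v \<in> sets M"
    and cover: "\<And>x v. v \<in> A x \<Longrightarrow> v \<in> B \<or> (\<exists>u\<in>F. v \<in> S u \<and> x \<in> E u v)"
  shows "(\<integral>\<^sup>+x. emeasure (count_space UNIV) (A x) \<partial>M)
    \<le> emeasure (count_space UNIV) B
       + (\<Sum>u\<in>F. \<integral>\<^sup>+v. emeasure M (E u v) * indicator (S u) v \<partial>count_space UNIV)"
proof -
  let ?g = "\<lambda>v x. indicator B v + (\<Sum>u\<in>F. indicator (E u v) x * indicator (S u) v) :: ennreal"
  have pointwise: "indicator (A x) v \<le> ?g v x" for x v
  proof (cases "v \<in> A x")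
    case True
    with cover consider "v \<in> B" | u where "u \<in> F" "v \<in> S u" "x \<in> E u v"
      by blast
    then show ?thesis
    proof cases
      case 2
      then have "(1::ennreal) \<le> (\<Sum>u\<in>F. indicator (E u v) x * indicator (S u) v)"
        using member_le_sum[of u F "\<lambda>u. indicator (E u v) x * indicator (S u) v :: ennreal"] \<open>finite F\<close>
        by simp
      with True show ?thesis
        by (simp add: add_increasing)
    qed (use True in simp)
  qed simp
  have "(\<integral>\<^sup>+x. emeasure (count_space UNIV) (A x) \<partial>M)
      = (\<integral>\<^sup>+x. \<integral>\<^sup>+v. indicator (A x) v \<partial>count_space UNIV \<partial>M)"
    by (simp add: nn_integral_indicator)
  also have "\<dots> \<le> (\<integral>\<^sup>+x. \<integral>\<^sup>+v. ?g v x \<partial>count_space UNIV \<partial>M)"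
    by (intro nn_integral_mono pointwise)
  also have "\<dots> = (\<integral>\<^sup>+v. \<integral>\<^sup>+x. ?g v x \<partial>M \<partial>count_space UNIV)"
    by (rule nn_integral_count_space_nn_integral) simp_all
  also have "\<dots> = (\<integral>\<^sup>+v. indicator B v + (\<Sum>u\<in>F. emeasure M (E u v) * indicator (S u) v) \<partial>count_space UNIV)"
    by (simp add: nn_integral_add nn_integral_sum nn_integral_multc emeasure_space_1)
  also have "\<dots> = emeasure (count_space UNIV) B
      + (\<Sum>u\<in>F. \<integral>\<^sup>+v. emeasure M (E u v) * indicator (S u) v \<partial>count_space UNIV)"
    by (simp add: nn_integral_add nn_integral_sum)
  finally show ?thesis .
qed

lemma emeasure_exponential_density_greaterThan:
  assumes "0 < l" "0 \<le> a"
  shows "emeasure (density lborel (exponential_density l)) {a<..} = ennreal (exp (- l * a))"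
proof -
  let ?E = "density lborel (exponential_density l)"
  interpret prob_space ?E
    by (rule prob_space_exponential_density[OF assms(1)])
  have "emeasure ?E {a<..} = emeasure ?E (space ?E - {..a})"
    by (rule arg_cong[where f="emeasure ?E"]) auto
  also have "\<dots> = 1 - emeasure ?E {..a}"
    using emeasure_space_1 by (subst emeasure_Diff) auto
  also have "\<dots> = ennreal (exp (- l * a))"
    using emeasure_erlang_density[OF assms(1), of 0 a] assms
    by (simp add: erlang_CDF_0 ennreal_1[symmetric] ennreal_minus del: ennreal_1)
  finally show ?thesis .
qed

lemma laplace_density_split:
  assumes "0 < lam" "x \<noteq> 0"
  shows "ennreal (exp (- \<bar>x\<bar> / lam) / (2 * lam))
       = ennreal (exponential_density (1 / lam) x) / 2 + ennreal (exponential_density (1 / lam) (- x)) / 2"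
  using assms by (cases "0 < x")
    (auto simp: exponential_density_def ennreal_divide_numeral abs_if field_simps)

lemma prob_space_laplace_measure:
  assumes "0 < lam"
  shows "prob_space (laplace_measure lam)"
proof
  let ?e = "\<lambda>x. ennreal (exponential_density (1 / lam) x)"
  have total: "(\<integral>\<^sup>+x. ?e x \<partial>lborel) = 1"
    using prob_space.emeasure_space_1[OF prob_space_exponential_density, of "1 / lam"] assms
    by (simp add: emeasure_density)
  have "(\<integral>\<^sup>+x. ?e (- x) \<partial>lborel) = (\<integral>\<^sup>+x. ?e x \<partial>distr lborel borel uminus)"
    by (subst nn_integral_distr) auto
  with total have reflected: "(\<integral>\<^sup>+x. ?e (- x) \<partial>lborel) = 1"
    by (simp add: lborel_distr_uminus)
  have "emeasure (laplace_measure lam) (space (laplace_measure lam))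
      = (\<integral>\<^sup>+x. ennreal (exp (- \<bar>x\<bar> / lam) / (2 * lam)) \<partial>lborel)"
    by (simp add: laplace_measure_def emeasure_density)
  also have "\<dots> = (\<integral>\<^sup>+x. ?e x / 2 + ?e (- x) / 2 \<partial>lborel)"
  proof (rule nn_integral_cong_AE)
    show "AE x in lborel. ennreal (exp (- \<bar>x\<bar> / lam) / (2 * lam)) = ?e x / 2 + ?e (- x) / 2"
      using AE_lborel_singleton[of 0]
      by (rule AE_mp) (intro AE_I2 impI laplace_density_split[OF assms])
  qed
  also have "\<dots> = (\<integral>\<^sup>+x. ?e x \<partial>lborel) / 2 + (\<integral>\<^sup>+x. ?e (- x) \<partial>lborel) / 2"
    by (subst nn_integral_add) (auto simp: nn_integral_divide)
  also have "\<dots> = 1"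
    using total reflected by (simp flip: add_divide_distrib_ennreal add: ennreal_divide_self)
  finally show "emeasure (laplace_measure lam) (space (laplace_measure lam)) = 1" .
qed

lemma emeasure_laplace_measure_greaterThan:
  assumes "0 < lam" "0 \<le> d"
  shows "emeasure (laplace_measure lam) {d<..} = ennreal (exp (- d / lam) / 2)"
proof -
  let ?E = "density lborel (exponential_density (1 / lam))"
  have "emeasure (laplace_measure lam) {d<..}
      = (\<integral>\<^sup>+x. ennreal (exponential_density (1 / lam) x) * indicator {d<..} x / 2 \<partial>lborel)"
    unfolding laplace_measure_def
  proof (subst emeasure_density, simp, simp, intro nn_integral_cong)
    fix x :: real
    show "ennreal (exp (- \<bar>x\<bar> / lam) / (2 * lam)) * indicator {d<..} x
        = ennreal (exponential_density (1 / lam) x) * indicator {d<..} x / 2"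
      using assms laplace_density_split[OF assms(1), of x]
      by (cases "d < x") (simp_all add: exponential_density_def)
  qed
  also have "\<dots> = emeasure ?E {d<..} / 2"
    by (simp add: nn_integral_divide emeasure_density)
  also have "\<dots> = ennreal (exp (- d / lam) / 2)"
    using assms by (simp add: emeasure_exponential_density_greaterThan ennreal_divide_numeral)
  finally show ?thesis .
qed

lemma product_prob_space_laplace_measure:
  "0 < lam \<Longrightarrow> product_prob_space (\<lambda>_::'i. laplace_measure lam)"
  unfolding product_prob_space_def product_prob_space_axioms_def product_sigma_finite_def
  by (auto intro: prob_space_imp_sigma_finite prob_space_laplace_measure)

lemma prob_space_noise_space:
  assumes "0 < lam"
  shows "prob_space (noise_space lam)"
proof -
  interpret product_prob_space "\<lambda>_::nat list. laplace_measure lam" UNIV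
    by (rule product_prob_space_laplace_measure[OF assms])
  show ?thesis
    unfolding noise_space_def by (rule prob_spaceI) (rule P.emeasure_space_1)
qed

lemma space_noise_space[simp]: "space (noise_space lam) = UNIV"
  by (simp add: noise_space_def space_PiM laplace_measure_def)

lemma measurable_noise_component[measurable]: "(\<lambda>\<eta>. \<eta> v) \<in> borel_measurable (noise_space lam)"
proof -
  have "sets (laplace_measure lam) = sets borel"
    by (simp add: laplace_measure_def)
  then show ?thesis
    unfolding noise_space_def by (metis measurable_component_singleton measurable_cong_sets UNIV_I)
qed

lemma emeasure_noise_space_all_greater:
  assumes "0 < lam" "0 \<le> d" "finite J"
  shows "emeasure (noise_space lam) {\<eta>. \<forall>v\<in>J. d < \<eta> v} = ennreal (exp (- d / lam) / 2) ^ card J"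
proof -
  interpret product_prob_space "\<lambda>_::nat list. laplace_measure lam" UNIV
    by (rule product_prob_space_laplace_measure[OF assms(1)])
  have "{\<eta>. \<forall>v\<in>J. d < \<eta> v} = {\<eta> \<in> space (noise_space lam). \<forall>v\<in>J. \<eta> v \<in> {d<..}}"
    by simp
  also have "emeasure (noise_space lam) \<dots> = (\<Prod>v\<in>J. emeasure (laplace_measure lam) {d<..})"
    unfolding noise_space_def using assms(3)
    by (intro emeasure_PiM_Collect) (auto simp: laplace_measure_def)
  finally show ?thesis
    using emeasure_laplace_measure_greaterThan[OF assms(1,2)] by simp
qed

definition subtree :: "nat \<Rightarrow> nat list \<Rightarrow> nat list set" where
  "subtree \<beta> u = {v \<in> cand_nodes \<beta>. take (length u) v = u}"

(* The nodes take j v with length u \<le> j < length v are u and its descendants above v. *)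
definition noise_exceeds_on_path :: "real \<Rightarrow> nat list \<Rightarrow> nat list \<Rightarrow> (nat list \<Rightarrow> real) set" where
  "noise_exceeds_on_path d u v = {\<eta>. \<forall>j. length u \<le> j \<and> j < length v \<longrightarrow> d < \<eta> (take j v)}"

lemma noise_exceeds_on_path_sets[measurable]:
  "noise_exceeds_on_path d u v \<in> sets (noise_space lam)"
proof -
  have "{\<eta> \<in> space (noise_space lam). \<forall>j. length u \<le> j \<and> j < length v \<longrightarrow> d < \<eta> (take j v)}
      \<in> sets (noise_space lam)"
    by measurable
  then show ?thesis
    by (simp add: noise_exceeds_on_path_def)
qed

lemma emeasure_noise_exceeds_on_path:
  assumes "0 < lam" "0 \<le> d"
  shows "emeasure (noise_space lam) (noise_exceeds_on_path d u v)
    = ennreal (exp (- d / lam) / 2) ^ (length v - length u)"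
proof -
  let ?J = "(\<lambda>j. take j v) ` {length u..<length v}"
  have "inj_on (\<lambda>j. take j v) {length u..<length v}"
  proof (rule inj_onI)
    fix a b
    assume "a \<in> {length u..<length v}" "b \<in> {length u..<length v}" "take a v = take b v"
    then show "a = b"
      by (metis atLeastLessThan_iff length_take min.absorb4)
  qed
  then have "card ?J = length v - length u"
    by (simp add: card_image)
  moreover have "noise_exceeds_on_path d u v = {\<eta>. \<forall>w\<in>?J. d < \<eta> w}"
    by (auto simp: noise_exceeds_on_path_def)
  ultimately show ?thesis
    using emeasure_noise_space_all_greater[OF assms, of ?J] by simp
qed

lemma nn_integral_cand_nodes_power:
  fixes q :: ennreal
  shows "(\<integral>\<^sup>+w. q ^ length w * indicator (cand_nodes \<beta>) w \<partial>count_space UNIV) = (\<Sum>n. (q * of_nat \<beta>) ^ n)"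
proof -
  define level where "level n = {w. set w \<subseteq> {..<\<beta>} \<and> length w = n}" for n
  have "(\<integral>\<^sup>+w. q ^ length w * indicator (cand_nodes \<beta>) w \<partial>count_space UNIV)
      = (\<integral>\<^sup>+w. (\<Sum>n. q ^ n * indicator (level n) w) \<partial>count_space UNIV)"
  proof (rule nn_integral_cong)
    fix w :: "nat list"
    have "(\<lambda>n. q ^ n * indicator (level n) w)
        = (\<lambda>n. if n = length w then q ^ length w * indicator (cand_nodes \<beta>) w else 0)"
      by (auto simp: level_def cand_nodes_def indicator_def fun_eq_iff)
    then show "q ^ length w * indicator (cand_nodes \<beta>) w = (\<Sum>n. q ^ n * indicator (level n) w)"
      using sums_unique[OF sums_single[of "length w"]] by simp
  qed
  also have "\<dots> = (\<Sum>n. \<integral>\<^sup>+w. q ^ n * indicator (level n) w \<partial>count_space UNIV)"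
    by (rule nn_integral_suminf) simp
  also have "\<dots> = (\<Sum>n. (q * of_nat \<beta>) ^ n)"
  proof (rule suminf_cong)
    fix n
    have "finite (level n)" "card (level n) = \<beta> ^ n"
      unfolding level_def using card_lists_length_eq[of "{..<\<beta>}" n]
      by (auto intro: finite_lists_length_eq)
    then show "(\<integral>\<^sup>+w. q ^ n * indicator (level n) w \<partial>count_space UNIV) = (q * of_nat \<beta>) ^ n"
      by (simp add: nn_integral_cmult_indicator power_mult_distrib)
  qed
  finally show ?thesis .
qed

lemma subtree_eq_image:
  assumes "u \<in> cand_nodes \<beta>"
  shows "subtree \<beta> u = (@) u ` cand_nodes \<beta>"
proof
  show "subtree \<beta> u \<subseteq> (@) u ` cand_nodes \<beta>"
  proof
    fix v assume v: "v \<in> subtree \<beta> u"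
    then have "take (length u) v = u"
      by (simp add: subtree_def)
    then have "v = u @ drop (length u) v"
      by (metis append_take_drop_id)
    moreover have "drop (length u) v \<in> cand_nodes \<beta>"
      using v by (auto simp: subtree_def cand_nodes_def dest: in_set_dropD)
    ultimately show "v \<in> (@) u ` cand_nodes \<beta>"
      by (rule image_eqI)
  qed
qed (use assms in \<open>auto simp: subtree_def cand_nodes_def\<close>)

lemma nn_integral_subtree_power:
  fixes q :: ennreal
  assumes "u \<in> cand_nodes \<beta>"
  shows "(\<integral>\<^sup>+v. q ^ (length v - length u) * indicator (subtree \<beta> u) v \<partial>count_space UNIV)
    = (\<Sum>n. (q * of_nat \<beta>) ^ n)"
proof -
  have "(\<integral>\<^sup>+v. q ^ (length v - length u) * indicator (subtree \<beta> u) v \<partial>count_space UNIV)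
      = (\<integral>\<^sup>+v. q ^ (length v - length u) \<partial>count_space (subtree \<beta> u))"
    by (rule nn_integral_count_space_indicator[symmetric]) (simp add: NO_MATCH_def)
  also have "\<dots> = (\<integral>\<^sup>+w. q ^ (length (u @ w) - length u) \<partial>count_space (cand_nodes \<beta>))"
    unfolding subtree_eq_image[OF assms]
  proof (rule nn_integral_bij_count_space[symmetric])
    show "bij_betw ((@) u) (cand_nodes \<beta>) ((@) u ` cand_nodes \<beta>)"
      by (rule bij_betw_imageI) (simp_all add: inj_on_def)
  qed
  also have "\<dots> = (\<integral>\<^sup>+w. q ^ length w * indicator (cand_nodes \<beta>) w \<partial>count_space UNIV)"
    by (simp add: nn_integral_count_space_indicator)
  also have "\<dots> = (\<Sum>n. (q * of_nat \<beta>) ^ n)"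
    by (rule nn_integral_cand_nodes_power)
  finally show ?thesis .
qed

lemma cnt_mono:
  assumes "sdom u \<subseteq> sdom v"
  shows "cnt D sdom u \<le> cnt D sdom v"
proof -
  have "filter_mset (\<lambda>x. x \<in> sdom u) D \<subseteq># filter_mset (\<lambda>x. x \<in> sdom v) D"
    using assms by (auto simp: subseteq_mset_def)
  then show ?thesis
    unfolding cnt_def by (rule size_mset_mono)
qed

lemma cnt_take_antimono:
  assumes scheme: "splitting_scheme \<Omega> \<beta> sdom" and v: "v \<in> cand_nodes \<beta>" and "k \<le> j"
  shows "cnt D sdom (take j v) \<le> cnt D sdom (take k v)"
  using \<open>k \<le> j\<close>
proof (induction j rule: dec_induct)
  case (step j)
  have "cnt D sdom (take (Suc j) v) \<le> cnt D sdom (take j v)"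
  proof (cases "j < length v")
    case True
    have "take j v \<in> cand_nodes \<beta>" "v ! j < \<beta>"
      using v True by (auto simp: cand_nodes_def dest: in_set_takeD)
    then have "sdom (take j v @ [v ! j]) \<subseteq> sdom (take j v)"
      using scheme unfolding splitting_scheme_def by blast
    then show ?thesis
      by (simp add: take_Suc_conv_app_nth[OF True] cnt_mono)
  qed simp
  with step.IH show ?case
    by linarith
qed simp

definition exact_leaves :: "nat \<Rightarrow> 'a multiset \<Rightarrow> (nat list \<Rightarrow> 'a set) \<Rightarrow> real \<Rightarrow> nat list set" where
  "exact_leaves \<beta> D sdom \<theta> = {u \<in> exact_tree \<beta> D sdom \<theta>. real (cnt D sdom u) \<le> \<theta>}"

lemma exact_tree_eq_root:
  assumes "real (cnt D sdom []) \<le> \<theta>"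
  shows "exact_tree \<beta> D sdom \<theta> = {[]}"
  using assms by (fastforce simp: exact_tree_def cand_nodes_def)

lemma biased_cnt_eq_floor:
  assumes "w \<noteq> []" "real (cnt D sdom w) \<le> \<theta>" "0 \<le> \<delta>"
  shows "biased_cnt D sdom \<theta> \<delta> w = \<theta> - \<delta>"
proof -
  have "\<delta> \<le> real (length w) * \<delta>"
    using assms by (simp add: Suc_le_eq mult_le_cancel_right1)
  then show ?thesis
    using assms(2) by (simp add: biased_cnt_def)
qed

(* u is the shallowest ancestor of v (v included) with count at most theta; below the root the
   biased count of every node from u down to the parent of v is at its floor theta - delta. *)
lemma privtree_out_below_exact_leaf:
  assumes scheme: "splitting_scheme \<Omega> \<beta> sdom" and "0 \<le> \<delta>"
    and root: "\<theta> < real (cnt D sdom [])"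
    and v: "v \<in> privtree_out \<beta> D sdom \<theta> \<delta> \<eta>"
    and not_inner: "v \<notin> exact_tree \<beta> D sdom \<theta> - exact_leaves \<beta> D sdom \<theta>"
  shows "\<exists>u\<in>exact_leaves \<beta> D sdom \<theta>. v \<in> subtree \<beta> u \<and> \<eta> \<in> noise_exceeds_on_path \<delta> u v"
proof -
  let ?low = "\<lambda>k. k \<le> length v \<and> real (cnt D sdom (take k v)) \<le> \<theta>"
  have vW: "v \<in> cand_nodes \<beta>"
    and split: "\<And>k. k < length v \<Longrightarrow> \<theta> < biased_cnt D sdom \<theta> \<delta> (take k v) + \<eta> (take k v)"
    using v by (auto simp: privtree_out_def)
  have "\<exists>k. ?low k"
  proof (rule ccontr)
    assume "\<nexists>k. ?low k"
    then have "\<theta> < real (cnt D sdom (take k v))" if "k \<le> length v" for k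
      using that by auto
    from this[of "length v"] this
    have "v \<in> exact_tree \<beta> D sdom \<theta> - exact_leaves \<beta> D sdom \<theta>"
      using vW by (auto simp: exact_tree_def exact_leaves_def)
    with not_inner show False ..
  qed
  define m where "m = (LEAST k. ?low k)"
  have m: "?low m"
    unfolding m_def using \<open>\<exists>k. ?low k\<close> by (rule LeastI_ex)
  have below_m: "\<theta> < real (cnt D sdom (take k v))" if "k < m" for k
    using not_less_Least[OF that[unfolded m_def]] that m by auto
  have "m \<noteq> 0"
    using m root by (cases m) auto
  let ?u = "take m v"
  have "?u \<in> exact_leaves \<beta> D sdom \<theta>"
    using vW m below_m by (auto simp: exact_leaves_def exact_tree_def cand_nodes_def dest: in_set_takeD)
  moreover have "v \<in> subtree \<beta> ?u"
    using vW m by (simp add: subtree_def min_absorb1)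
  moreover have "\<delta> < \<eta> (take j v)" if "m \<le> j" "j < length v" for j
  proof -
    have "real (cnt D sdom (take j v)) \<le> \<theta>"
      using cnt_take_antimono[OF scheme vW \<open>m \<le> j\<close>, of D] m by linarith
    then have "biased_cnt D sdom \<theta> \<delta> (take j v) = \<theta> - \<delta>"
      using \<open>m \<noteq> 0\<close> that \<open>0 \<le> \<delta>\<close> by (intro biased_cnt_eq_floor) auto
    then show ?thesis
      using split[OF \<open>j < length v\<close>] by simp
  qed
  then have "\<eta> \<in> noise_exceeds_on_path \<delta> ?u v"
    using m by (simp add: noise_exceeds_on_path_def min_absorb1)
  ultimately show ?thesis
    by blast
qed

lemma card_Diff_plus_double_le:
  assumes "finite T" "L \<subseteq> T"
  shows "of_nat (card (T - L)) + 2 * of_nat (card L) \<le> (2 * of_nat (card T) :: ennreal)"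
proof -
  have "card (T - L) + 2 * card L \<le> 2 * card T"
    using card_Diff_subset[OF finite_subset[OF assms(2,1)] assms(2)] card_mono[OF assms]
    by linarith
  then have "(of_nat (card (T - L) + 2 * card L) :: ennreal) \<le> of_nat (2 * card T)"
    by (rule of_nat_mono)
  then show ?thesis
    by simp
qed

(* With delta = lambda ln beta each noise exceeds delta with probability 1/(2 beta), which exactly
   compensates the beta-fold branching. *)
lemma expected_noisy_subtree_size:
  assumes "0 < lam" "1 \<le> \<beta>" "u \<in> cand_nodes \<beta>"
  shows "(\<integral>\<^sup>+v. emeasure (noise_space lam) (noise_exceeds_on_path (lam * ln (real \<beta>)) u v)
      * indicator (subtree \<beta> u) v \<partial>count_space UNIV) = 2"
proof -
  let ?q = "ennreal (1 / (2 * real \<beta>))"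
  have "0 \<le> lam * ln (real \<beta>)"
    using assms by simp
  moreover have "exp (- (lam * ln (real \<beta>)) / lam) / 2 = 1 / (2 * real \<beta>)"
    using assms by (simp add: exp_minus inverse_eq_divide)
  ultimately have "emeasure (noise_space lam) (noise_exceeds_on_path (lam * ln (real \<beta>)) u v)
      = ?q ^ (length v - length u)" for v
    by (simp only: emeasure_noise_exceeds_on_path[OF assms(1)])
  then have "(\<integral>\<^sup>+v. emeasure (noise_space lam) (noise_exceeds_on_path (lam * ln (real \<beta>)) u v)
      * indicator (subtree \<beta> u) v \<partial>count_space UNIV)
      = (\<integral>\<^sup>+v. ?q ^ (length v - length u) * indicator (subtree \<beta> u) v \<partial>count_space UNIV)"
    by simp
  also have "\<dots> = (\<Sum>n. (?q * of_nat \<beta>) ^ n)"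
    by (rule nn_integral_subtree_power[OF assms(3)])
  also have "?q * of_nat \<beta> = ennreal (1 / 2)"
    using assms(2) by (simp add: ennreal_of_nat_eq_real_of_nat flip: ennreal_mult)
  also have "(\<Sum>n. ennreal (1 / 2) ^ n) = (\<Sum>n. ennreal ((1 / 2) ^ n))"
    by (intro suminf_cong ennreal_power) simp
  also have "\<dots> = ennreal 2"
    using geometric_sums[of "1 / 2 :: real"] by (intro suminf_ennreal_eq) simp_all
  finally show ?thesis
    by simp
qed

theorem lemma3:
  fixes \<Omega> :: "'a set" and \<beta> :: nat and sdom :: "nat list \<Rightarrow> 'a set"
    and D :: "'a multiset" and lam \<theta> \<delta> :: real
  assumes scheme: "splitting_scheme \<Omega> \<beta> sdom"
    and data: "set_mset D \<subseteq> \<Omega>"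
    and lam_pos: "lam > 0"
    and delta_def: "\<delta> = lam * ln (real \<beta>)"
    and fin: "finite (exact_tree \<beta> D sdom \<theta>)"
    and nontriv: "card (exact_tree \<beta> D sdom \<theta>) > 1"
  shows "(\<integral>\<^sup>+ \<eta>. emeasure (count_space UNIV) (privtree_out \<beta> D sdom \<theta> \<delta> \<eta>) \<partial>noise_space lam)
           \<le> 2 * of_nat (card (exact_tree \<beta> D sdom \<theta>))"
proof -
  let ?T = "exact_tree \<beta> D sdom \<theta>" and ?L = "exact_leaves \<beta> D sdom \<theta>"
  interpret prob_space "noise_space lam"
    by (rule prob_space_noise_space[OF lam_pos])
  have "2 \<le> \<beta>"
    using scheme by (simp add: splitting_scheme_def)
  then have "0 \<le> \<delta>"
    unfolding delta_def using lam_pos by (intro mult_nonneg_nonneg ln_ge_zero) auto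
  have root: "\<theta> < real (cnt D sdom [])"
    using nontriv exact_tree_eq_root[of D sdom \<theta> \<beta>] by (cases "\<theta> < real (cnt D sdom [])") auto
  have "?L \<subseteq> ?T"
    by (auto simp: exact_leaves_def)
  with fin have "finite ?L"
    by (simp add: finite_subset)
  have leaf_terms: "(\<integral>\<^sup>+v. emeasure (noise_space lam) (noise_exceeds_on_path \<delta> u v)
      * indicator (subtree \<beta> u) v \<partial>count_space UNIV) = 2" if "u \<in> ?L" for u
    unfolding delta_def using that lam_pos \<open>2 \<le> \<beta>\<close>
    by (intro expected_noisy_subtree_size) (auto simp: exact_leaves_def exact_tree_def)
  have "(\<integral>\<^sup>+\<eta>. emeasure (count_space UNIV) (privtree_out \<beta> D sdom \<theta> \<delta> \<eta>) \<partial>noise_space lam)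
      \<le> emeasure (count_space UNIV) (?T - ?L) + (\<Sum>u\<in>?L. \<integral>\<^sup>+v. emeasure (noise_space lam)
           (noise_exceeds_on_path \<delta> u v) * indicator (subtree \<beta> u) v \<partial>count_space UNIV)"
    using privtree_out_below_exact_leaf[OF scheme \<open>0 \<le> \<delta>\<close> root]
    by (intro nn_integral_card_le_cover \<open>finite ?L\<close>) auto
  also have "\<dots> = of_nat (card (?T - ?L)) + 2 * of_nat (card ?L)"
    using fin leaf_terms by (simp add: mult.commute)
  also have "\<dots> \<le> 2 * of_nat (card ?T)"
    using fin \<open>?L \<subseteq> ?T\<close> by (rule card_Diff_plus_double_le)
  finally show ?thesis .
qed

end
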